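(* Let $G=(V,E)$ be a finite $d$-regular graph ($d\ge 1$) with adjacency matrix $A$, and let $\phi:V\to\mathbb{R}$ satisfy $$(d\cdot \mathrm{Id} + A)\phi = \varepsilon\phi$$ for some real $\varepsilon \neq d$. Let $m\in V$ be a vertex with $|\phi(m)|=\max_{v\in V}|\phi(v)|$. Then for every integer $k\ge 0$, $$\|\phi\|_{\ell^\infty} \le \left(\frac{d}{d-\varepsilon}\right)^{2k}\left(\sum_{j\in V}\big[(AD^{-1})^{2k}\delta_m\big](j)^2\right)^{1/2}\|\phi\|_{\ell^2}.$$
   Context: $D$ is the diagonal degree matrix (here $D=d\cdot\mathrm{Id}$), so $AD^{-1}$ is the transition matrix of the simple random walk: if $\psi$ is a probability distribution on $V$, then $AD^{-1}\psi$ is the distribution after one step to a uniformly random neighbor. $\delta_m:V\to\mathbb{R}$ is the indicator function of the vertex $m$. $\|f\|_{\ell^2}=(\sum_{v}f(v)^2)^{1/2}$ and $\|f\|_{\ell^\infty}=\max_v|f(v)|$. *)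

theory Defs
  imports Complex_Main
begin

definition finite_simple_graph :: "'a set \<Rightarrow> ('a \<Rightarrow> 'a \<Rightarrow> bool) \<Rightarrow> bool" where
  "finite_simple_graph V E \<longleftrightarrow> finite V
     \<and> (\<forall>u v. E u v \<longrightarrow> u \<in> V \<and> v \<in> V)
     \<and> (\<forall>u v. E u v \<longrightarrow> E v u)
     \<and> (\<forall>v. \<not> E v v)"

definition regular_graph :: "'a set \<Rightarrow> ('a \<Rightarrow> 'a \<Rightarrow> bool) \<Rightarrow> nat \<Rightarrow> bool" where
  "regular_graph V E d \<longleftrightarrow> finite_simple_graph V E
     \<and> (\<forall>v\<in>V. card {u\<in>V. E v u} = d)"

definition adj_matrix :: "('a \<Rightarrow> 'a \<Rightarrow> bool) \<Rightarrow> 'a \<Rightarrow> 'a \<Rightarrow> real" where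
  "adj_matrix E v u = (if E v u then 1 else 0)"

definition adj_op :: "'a set \<Rightarrow> ('a \<Rightarrow> 'a \<Rightarrow> bool) \<Rightarrow> ('a \<Rightarrow> real) \<Rightarrow> 'a \<Rightarrow> real" where
  "adj_op V E f v = (\<Sum>u\<in>V. adj_matrix E v u * f u)"

text \<open>Action of A D^{-1} with D = d Id (random walk transition matrix).\<close>
definition walk_op :: "'a set \<Rightarrow> ('a \<Rightarrow> 'a \<Rightarrow> bool) \<Rightarrow> nat \<Rightarrow> ('a \<Rightarrow> real) \<Rightarrow> 'a \<Rightarrow> real" where
  "walk_op V E d f v = (\<Sum>u\<in>V. adj_matrix E v u * (f u / real d))"

definition delta :: "'a \<Rightarrow> 'a \<Rightarrow> real" where
  "delta m v = (if v = m then 1 else 0)"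

definition l2_norm :: "'a set \<Rightarrow> ('a \<Rightarrow> real) \<Rightarrow> real" where
  "l2_norm V f = sqrt (\<Sum>v\<in>V. (f v)\<^sup>2)"

definition linf_norm :: "'a set \<Rightarrow> ('a \<Rightarrow> real) \<Rightarrow> real" where
  "linf_norm V f = Max ((\<lambda>v. \<bar>f v\<bar>) ` V)"

end

theory Submission
  imports Defs "HOL-Analysis.L2_Norm"
begin

text \<open>The walk operator \<open>W = AD\<^sup>-\<^sup>1\<close> is self-adjoint, so testing the eigenfunction \<open>\<phi>\<close>
  (with \<open>W\<phi> = \<mu>\<phi>\<close>) against \<open>W\<^sup>n\<delta>\<^sub>m\<close> gives
  \<open>\<langle>W\<^sup>n\<delta>\<^sub>m, \<phi>\<rangle> = \<langle>\<delta>\<^sub>m, W\<^sup>n\<phi>\<rangle> = \<mu>\<^sup>n \<phi>(m)\<close>, and Cauchy-Schwarz bounds the left-hand side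
  by \<open>\<parallel>W\<^sup>n\<delta>\<^sub>m\<parallel>\<^sub>2 \<parallel>\<phi>\<parallel>\<^sub>2\<close>. The equation \<open>(dI + A)\<phi> = \<epsilon>\<phi>\<close> says \<open>\<mu> = (\<epsilon> - d)/d\<close>, and
  \<open>|\<phi>(m)| = \<parallel>\<phi>\<parallel>\<^sub>\<infinity>\<close> by the choice of \<open>m\<close>.\<close>

lemma walk_op_self_adjoint:
  assumes "finite V" and "\<forall>u v. E u v \<longrightarrow> E v u"
  shows "(\<Sum>v\<in>V. walk_op V E d f v * g v) = (\<Sum>v\<in>V. f v * walk_op V E d g v)"
proof -
  have adj_sym: "adj_matrix E v u = adj_matrix E u v" for u v
    using assms(2) unfolding adj_matrix_def by metis
  have "(\<Sum>v\<in>V. walk_op V E d f v * g v) = (\<Sum>v\<in>V. \<Sum>u\<in>V. adj_matrix E v u * f u * g v / real d)"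
    unfolding walk_op_def by (simp add: sum_distrib_right)
  also have "\<dots> = (\<Sum>u\<in>V. \<Sum>v\<in>V. adj_matrix E v u * f u * g v / real d)"
    by (rule sum.swap)
  also have "\<dots> = (\<Sum>u\<in>V. f u * walk_op V E d g u)"
    unfolding walk_op_def sum_distrib_left by (intro sum.cong refl) (simp add: adj_sym)
  finally show ?thesis .
qed

lemma walk_op_funpow_self_adjoint:
  assumes "finite V" and "\<forall>u v. E u v \<longrightarrow> E v u"
  shows "(\<Sum>v\<in>V. (walk_op V E d ^^ n) f v * g v) = (\<Sum>v\<in>V. f v * (walk_op V E d ^^ n) g v)"
proof (induction n arbitrary: g)
  case 0
  then show ?case by simp
next
  case (Suc n)
  have "(\<Sum>v\<in>V. (walk_op V E d ^^ Suc n) f v * g v)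
      = (\<Sum>v\<in>V. (walk_op V E d ^^ n) f v * walk_op V E d g v)"
    using walk_op_self_adjoint[OF assms] by simp
  also have "\<dots> = (\<Sum>v\<in>V. f v * (walk_op V E d ^^ n) (walk_op V E d g) v)"
    using Suc by simp
  also have "\<dots> = (\<Sum>v\<in>V. f v * (walk_op V E d ^^ Suc n) g v)"
    by (simp add: funpow_Suc_right del: funpow.simps)
  finally show ?case .
qed

lemma walk_op_funpow_eigen:
  assumes "\<forall>v\<in>V. walk_op V E d \<phi> v = \<mu> * \<phi> v" and "v \<in> V"
  shows "(walk_op V E d ^^ n) \<phi> v = \<mu> ^ n * \<phi> v"
  using assms(2)
proof (induction n arbitrary: v)
  case 0
  then show ?case by simp
next
  case (Suc n)
  have "(walk_op V E d ^^ Suc n) \<phi> v = (\<Sum>u\<in>V. adj_matrix E v u * ((walk_op V E d ^^ n) \<phi> u / real d))"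
    by (simp add: walk_op_def)
  also have "\<dots> = (\<Sum>u\<in>V. \<mu> ^ n * (adj_matrix E v u * (\<phi> u / real d)))"
    using Suc.IH by (intro sum.cong) auto
  also have "\<dots> = \<mu> ^ n * walk_op V E d \<phi> v"
    by (simp add: walk_op_def sum_distrib_left)
  also have "\<dots> = \<mu> ^ Suc n * \<phi> v"
    using assms(1) Suc.prems by simp
  finally show ?case .
qed

lemma sum_delta_mult:
  assumes "finite V" and "m \<in> V"
  shows "(\<Sum>v\<in>V. delta m v * f v) = f m"
proof -
  have "(\<Sum>v\<in>V. delta m v * f v) = (\<Sum>v\<in>V. if v = m then f v else 0)"
    by (rule sum.cong) (auto simp: delta_def)
  then show ?thesis
    using assms by (simp add: sum.delta')
qed

lemma abs_sum_mult_le_l2_norm: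
  "\<bar>\<Sum>v\<in>V. f v * g v\<bar> \<le> l2_norm V f * l2_norm V g"
proof -
  have "\<bar>\<Sum>v\<in>V. f v * g v\<bar> \<le> (\<Sum>v\<in>V. \<bar>f v\<bar> * \<bar>g v\<bar>)"
    by (metis (no_types, lifting) abs_mult sum.cong sum_abs)
  also have "\<dots> \<le> L2_set f V * L2_set g V"
    by (rule L2_set_mult_ineq)
  finally show ?thesis
    by (simp add: l2_norm_def L2_set_def)
qed

lemma walk_op_eigenfunction_value_bound:
  assumes "finite V" and "\<forall>u v. E u v \<longrightarrow> E v u" and "m \<in> V"
    and "\<forall>v\<in>V. walk_op V E d \<phi> v = \<mu> * \<phi> v"
  shows "\<bar>\<mu>\<bar> ^ n * \<bar>\<phi> m\<bar> \<le> l2_norm V ((walk_op V E d ^^ n) (delta m)) * l2_norm V \<phi>"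
proof -
  have "(\<Sum>v\<in>V. (walk_op V E d ^^ n) (delta m) v * \<phi> v) = (\<Sum>v\<in>V. delta m v * (walk_op V E d ^^ n) \<phi> v)"
    by (rule walk_op_funpow_self_adjoint[OF assms(1,2)])
  also have "\<dots> = \<mu> ^ n * \<phi> m"
    using sum_delta_mult[OF assms(1,3)] walk_op_funpow_eigen[OF assms(4,3)] by simp
  finally show ?thesis
    using abs_sum_mult_le_l2_norm by (metis abs_mult power_abs)
qed

lemma walk_op_eq_adj_op_div:
  "walk_op V E d f v = adj_op V E f v / real d"
  by (simp add: walk_op_def adj_op_def sum_divide_distrib)

theorem theorem2:
  fixes V :: "'a set" and E :: "'a \<Rightarrow> 'a \<Rightarrow> bool" and d :: nat
    and \<phi> :: "'a \<Rightarrow> real" and \<epsilon> :: real and m :: 'a and k :: nat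
  assumes "regular_graph V E d" and "d \<ge> 1"
    and "\<forall>v\<in>V. real d * \<phi> v + adj_op V E \<phi> v = \<epsilon> * \<phi> v"
    and "\<epsilon> \<noteq> real d"
    and "m \<in> V" and "\<bar>\<phi> m\<bar> = Max ((\<lambda>v. \<bar>\<phi> v\<bar>) ` V)"
  shows "linf_norm V \<phi> \<le> (real d / (real d - \<epsilon>)) ^ (2 * k)
           * l2_norm V ((walk_op V E d ^^ (2 * k)) (delta m)) * l2_norm V \<phi>"
proof -
  have graph: "finite V" "\<forall>u v. E u v \<longrightarrow> E v u"
    using assms(1) unfolding regular_graph_def finite_simple_graph_def by auto
  define \<mu> where "\<mu> = (\<epsilon> - real d) / real d"
  have d_pos: "real d > 0" and \<mu>_nonzero: "\<mu> \<noteq> 0"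
    using assms(2,4) by (auto simp: \<mu>_def)
  have "\<forall>v\<in>V. walk_op V E d \<phi> v = \<mu> * \<phi> v"
    using assms(3) d_pos by (simp add: walk_op_eq_adj_op_div \<mu>_def field_simps)
  then have bound: "\<bar>\<mu>\<bar> ^ (2 * k) * \<bar>\<phi> m\<bar>
      \<le> l2_norm V ((walk_op V E d ^^ (2 * k)) (delta m)) * l2_norm V \<phi>"
    by (rule walk_op_eigenfunction_value_bound[OF graph assms(5)])
  have "real d / (real d - \<epsilon>) = - (1 / \<mu>)"
    using d_pos assms(4) by (simp add: \<mu>_def field_simps)
  then have factor: "(real d / (real d - \<epsilon>)) ^ (2 * k) = 1 / \<bar>\<mu>\<bar> ^ (2 * k)"
    by (simp add: power_even_abs power_one_over)
  have "linf_norm V \<phi> = 1 / \<bar>\<mu>\<bar> ^ (2 * k) * (\<bar>\<mu>\<bar> ^ (2 * k) * \<bar>\<phi> m\<bar>)"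
    using assms(6) \<mu>_nonzero by (simp add: linf_norm_def)
  also have "\<dots> \<le> 1 / \<bar>\<mu>\<bar> ^ (2 * k)
      * (l2_norm V ((walk_op V E d ^^ (2 * k)) (delta m)) * l2_norm V \<phi>)"
    using bound by (rule mult_left_mono) simp
  finally show ?thesis
    by (simp add: factor mult.assoc)
qed

end
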